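(* Let $\mathcal{H}$ be a real separable Hilbert space, $t_0>0$, and let $(\Omega,\mathcal{F},\{\mathcal{F}_t\}_{t\geq t_0},\mathbb{P})$ be a filtered probability space carrying an $\mathcal{H}$-valued Brownian motion $W_X$. Assume $f:\mathcal{H}\to\mathbb{R}$ is convex, of class $\mathcal{C}^1$, with $L$-Lipschitz continuous gradient and $\operatorname{argmin}_{\mathcal{H}} f\neq\emptyset$, with minimum norm minimizer $x^*$; $\varepsilon:[t_0,+\infty)\to\mathbb{R}^+$ is nonincreasing, of class $\mathcal{C}^1$, with $\lim_{t\to+\infty}\varepsilon(t)=0$; $\delta>0$, $\lambda>0$; and $\sigma_X:[t_0,+\infty)\to\mathcal{L}(\mathcal{H},\mathcal{H})$ is measurable and square-integrable. Let $(X,Y)$ be a solution trajectory of \[ \begin{cases} dX(t)=Y(t)\,dt,\\ dY(t)=\big(-\delta\sqrt{\varepsilon(t)}\,Y(t)-\nabla f(X(t))-\varepsilon(t)X(t)\big)dt+\sigma_X(t)\,dW_X(t),\\ X(t_0)=X_0,\quad Y(t_0)=Y_0. \end{cases} \] Then for all $t\geq t_0$: \[ f(X(t))-\inf_{\mathcal{H}}f\leq \mathcal{E}(t,X(t),Y(t))+\frac{\varepsilon(t)}{2}\|x^*\|^2,\qquad \|X(t)-x_{\varepsilon(t)}\|^2\leq \frac{2\,\mathcal{E}(t,X(t),Y(t))}{\varepsilon(t)}. \] Therefore, $X(t)$ converges strongly to $x^*$ almost surely if $\lim_{t\to+\infty}\frac{\mathcal{E}(t,X(t),Y(t))}{\varepsilon(t)}=0$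 (almost surely).
   Context: $\varphi_t(x):=f(x)+\frac{\varepsilon(t)}{2}\|x\|^2$; $x_{\varepsilon(t)}:=\operatorname{argmin}_{\mathcal{H}}\varphi_t$ (the unique minimizer); $V(t,x,y):=\lambda\sqrt{\varepsilon(t)}(x-x_{\varepsilon(t)})+y$; and the energy function is $\mathcal{E}(t,x,y):=\varphi_t(x)-\varphi_t(x_{\varepsilon(t)})+\frac12\|V(t,x,y)\|^2$. *)

theory Defs
  imports "HOL-Probability.Probability"
begin

definition phi :: "('a::real_normed_vector \<Rightarrow> real) \<Rightarrow> real \<Rightarrow> 'a \<Rightarrow> real" where
  "phi f e x = f x + e / 2 * (norm x)\<^sup>2"

definition xeps :: "('a::real_normed_vector \<Rightarrow> real) \<Rightarrow> real \<Rightarrow> 'a" where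
  "xeps f e = (THE x. \<forall>y. phi f e x \<le> phi f e y)"

definition Vfun :: "('a::real_normed_vector \<Rightarrow> real) \<Rightarrow> (real \<Rightarrow> real) \<Rightarrow> real \<Rightarrow> real \<Rightarrow> 'a \<Rightarrow> 'a \<Rightarrow> 'a" where
  "Vfun f eps lam t x y = (lam * sqrt (eps t)) *\<^sub>R (x - xeps f (eps t)) + y"

definition Energy :: "('a::real_normed_vector \<Rightarrow> real) \<Rightarrow> (real \<Rightarrow> real) \<Rightarrow> real \<Rightarrow> real \<Rightarrow> 'a \<Rightarrow> 'a \<Rightarrow> real" where
  "Energy f eps lam t x y =
     phi f (eps t) x - phi f (eps t) (xeps f (eps t)) + 1/2 * (norm (Vfun f eps lam t x y))\<^sup>2"

definition argmin_set :: "('a \<Rightarrow> real) \<Rightarrow> 'a set" where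
  "argmin_set f = {x. \<forall>y. f x \<le> f y}"

end

theory Submission
  imports Defs
begin

(* Both estimates are pointwise facts about the Tikhonov regularisation
   phi_e = f + e/2 |.|^2 and hold for arbitrary x, y whenever e = eps t > 0.
   Being e-strongly convex, phi_e has a unique minimiser x_e and grows quadratically around it:
   phi_e x - phi_e x_e >= e/2 |x - x_e|^2.  The energy dominates phi_e x - phi_e x_e, which gives
   the second estimate, and phi_e x_e <= phi_e xstar gives the first.
   For the convergence, adding the quadratic growth inequalities of x_e and x_e' for e' <= e
   yields |x_e - x_e'|^2 <= |x_e'|^2 - |x_e|^2.  So |x_e| increases as e decreases to 0, is
   bounded by |xstar|, and x_e is Cauchy; its limit minimises f and has norm at most |xstar|, hence
   is xstar.  Finally |X t - xstar| <= |X t - x_(eps t)| + |x_(eps t) - xstar| tends to 0. *)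

lemma power2_norm_convex_combination:
  fixes a b :: "'a::real_inner"
  shows "(norm ((1 - s) *\<^sub>R a + s *\<^sub>R b))\<^sup>2
    = (1 - s) * (norm a)\<^sup>2 + s * (norm b)\<^sup>2 - s * (1 - s) * (norm (a - b))\<^sup>2"
  by (simp add: power2_norm_eq_inner inner_add_left inner_add_right inner_diff_left
      inner_diff_right inner_commute algebra_simps)

lemma phi_strongly_convex:
  fixes f :: "'a::real_inner \<Rightarrow> real"
  assumes "convex_on UNIV f" and "0 \<le> s" and "s \<le> 1"
  shows "phi f e ((1 - s) *\<^sub>R a + s *\<^sub>R b)
    \<le> (1 - s) * phi f e a + s * phi f e b - e / 2 * s * (1 - s) * (norm (a - b))\<^sup>2"
proof -
  have "f ((1 - s) *\<^sub>R a + s *\<^sub>R b) \<le> (1 - s) * f a + s * f b"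
    using convex_onD[OF assms(1)] assms(2,3) by simp
  then show ?thesis
    unfolding phi_def power2_norm_convex_combination
    by (simp add: algebra_simps diff_divide_distrib)
qed

lemma phi_quadratic_growth:
  fixes f :: "'a::real_inner \<Rightarrow> real"
  assumes convex: "convex_on UNIV f" and "0 \<le> e" and min: "\<And>z. phi f e x \<le> phi f e z"
  shows "e / 2 * (norm (y - x))\<^sup>2 \<le> phi f e y - phi f e x"
proof (rule tendsto_upperbound)
  let ?c = "e / 2 * (norm (y - x))\<^sup>2"
  have "((\<lambda>s. (1 - s) * ?c) \<longlongrightarrow> (1 - 0) * ?c) (at_right 0)"
    by (intro tendsto_intros)
  then show "((\<lambda>s. (1 - s) * ?c) \<longlongrightarrow> ?c) (at_right 0)" by simp
  have "(1 - s) * ?c \<le> phi f e y - phi f e x" if "0 < s" "s < 1" for s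
  proof -
    have "phi f e x \<le> phi f e ((1 - s) *\<^sub>R x + s *\<^sub>R y)" by (rule min)
    also have "\<dots> \<le> (1 - s) * phi f e x + s * phi f e y - e / 2 * s * (1 - s) * (norm (x - y))\<^sup>2"
      using phi_strongly_convex[OF convex] that by simp
    finally have "s * ((1 - s) * ?c) \<le> s * (phi f e y - phi f e x)"
      by (simp add: norm_minus_commute algebra_simps)
    then show ?thesis using that by simp
  qed
  then show "\<forall>\<^sub>F s in at_right 0. (1 - s) * ?c \<le> phi f e y - phi f e x"
    unfolding eventually_at_right_field by (intro exI[of _ 1]) auto
qed simp

lemma Cauchy_phi_minimising_sequence:
  fixes f :: "'a::real_inner \<Rightarrow> real"
  assumes convex: "convex_on UNIV f" and "0 < e"
    and lower: "\<And>z. m \<le> phi f e z" and lim: "(\<lambda>n. phi f e (u n)) \<longlonglongrightarrow> m"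
  shows "Cauchy u"
proof (rule metric_CauchyI)
  fix r :: real
  assume "0 < r"
  with \<open>0 < e\<close> have "m < m + e * r\<^sup>2 / 8" by simp
  with lim have "\<forall>\<^sub>F n in sequentially. phi f e (u n) < m + e * r\<^sup>2 / 8"
    by (rule order_tendstoD(2))
  then obtain N where N: "\<And>n. N \<le> n \<Longrightarrow> phi f e (u n) < m + e * r\<^sup>2 / 8"
    unfolding eventually_sequentially by blast
  have "dist (u n) (u k) < r" if "N \<le> n" "N \<le> k" for n k
  proof -
    have "m \<le> phi f e ((1 - 1/2) *\<^sub>R u n + (1/2) *\<^sub>R u k)" by (rule lower)
    also have "\<dots> \<le> (1 - 1/2) * phi f e (u n) + (1/2) * phi f e (u k)
        - e / 2 * (1/2) * (1 - 1/2) * (norm (u n - u k))\<^sup>2"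
      by (rule phi_strongly_convex[OF convex]) auto
    also have "\<dots> = phi f e (u n) / 2 + phi f e (u k) / 2 - e * (norm (u n - u k))\<^sup>2 / 8"
      by simp
    finally have "e * (norm (u n - u k))\<^sup>2 < e * r\<^sup>2"
      using N[OF that(1)] N[OF that(2)] by linarith
    with \<open>0 < e\<close> have "(norm (u n - u k))\<^sup>2 < r\<^sup>2" by simp
    from power2_less_imp_less[OF this] \<open>0 < r\<close> show ?thesis
      by (simp add: dist_norm)
  qed
  then show "\<exists>N. \<forall>n\<ge>N. \<forall>k\<ge>N. dist (u n) (u k) < r" by blast
qed

lemma min_norm_minimiser_unique:
  fixes f :: "'a::real_inner \<Rightarrow> real"
  assumes convex: "convex_on UNIV f"
    and min: "\<And>y. f xs \<le> f y" and min_norm: "\<And>z. (\<forall>y. f z \<le> f y) \<Longrightarrow> norm xs \<le> norm z"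
    and "f z \<le> f xs" and "norm z \<le> norm xs"
  shows "z = xs"
proof -
  define w where "w = (1 - 1/2) *\<^sub>R z + (1/2) *\<^sub>R xs"
  have "f w \<le> (1 - 1/2) * f z + (1/2) * f xs"
    unfolding w_def by (rule convex_onD[OF convex]) auto
  with \<open>f z \<le> f xs\<close> have "f w \<le> f xs" by simp
  with min have "\<forall>y. f w \<le> f y" using order_trans by blast
  then have "(norm xs)\<^sup>2 \<le> (norm w)\<^sup>2" by (simp add: min_norm power_mono)
  also have "\<dots> = (norm z)\<^sup>2 / 2 + (norm xs)\<^sup>2 / 2 - (norm (z - xs))\<^sup>2 / 4"
    unfolding w_def power2_norm_convex_combination by simp
  finally have "(norm xs)\<^sup>2 \<le> (norm z)\<^sup>2 / 2 + (norm xs)\<^sup>2 / 2 - (norm (z - xs))\<^sup>2 / 4" .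
  moreover have "(norm z)\<^sup>2 \<le> (norm xs)\<^sup>2"
    using \<open>norm z \<le> norm xs\<close> by (simp add: power_mono)
  ultimately have "(norm (z - xs))\<^sup>2 \<le> 0" by linarith
  then show ?thesis by simp
qed

lemma Cauchy_if_dist_le_norm_gap:
  fixes g :: "nat \<Rightarrow> 'a::real_normed_vector"
  assumes gap: "\<And>n k. n \<le> k \<Longrightarrow> (norm (g n - g k))\<^sup>2 \<le> (norm (g k))\<^sup>2 - (norm (g n))\<^sup>2"
    and bounded: "\<And>n. norm (g n) \<le> B"
  shows "Cauchy g"
proof -
  define a where "a n = (norm (g n))\<^sup>2" for n
  have "incseq a"
  proof (rule incseq_SucI)
    fix n
    show "a n \<le> a (Suc n)"
      using gap[of n "Suc n"] zero_le_power2[of "norm (g n - g (Suc n))"]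
      unfolding a_def by linarith
  qed
  moreover have "\<forall>n. a n \<le> B\<^sup>2"
    unfolding a_def using bounded by (simp add: power_mono)
  ultimately obtain A where "a \<longlonglongrightarrow> A"
    by (rule incseq_convergent)
  then have "Cauchy a" by (rule LIMSEQ_imp_Cauchy)
  show "Cauchy g"
  proof (rule metric_CauchyI)
    fix r :: real
    assume "0 < r"
    then obtain N where N: "\<And>n k. N \<le> n \<Longrightarrow> N \<le> k \<Longrightarrow> \<bar>a n - a k\<bar> < r\<^sup>2"
      using metric_CauchyD[OF \<open>Cauchy a\<close>, of "r\<^sup>2"] by (auto simp: dist_real_def)
    have "norm (g n - g k) < r" if "N \<le> n" "N \<le> k" for n k
    proof (rule power2_less_imp_less)
      show "(norm (g n - g k))\<^sup>2 < r\<^sup>2"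
      proof (cases "n \<le> k")
        case True
        then show ?thesis
          using gap[of n k] N[OF that] unfolding a_def abs_less_iff by linarith
      next
        case False
        then show ?thesis
          using gap[of k n] N[OF that] unfolding a_def abs_less_iff norm_minus_commute[of "g n"]
          by linarith
      qed
    qed (use \<open>0 < r\<close> in simp)
    then show "\<exists>N. \<forall>n\<ge>N. \<forall>k\<ge>N. dist (g n) (g k) < r"
      by (auto simp: dist_norm)
  qed
qed

locale tikhonov =
  fixes f :: "'a::{real_inner, complete_space} \<Rightarrow> real"
  assumes convex: "convex_on UNIV f"
    and continuous: "continuous_on UNIV f"
    and bdd_below: "bdd_below (range f)"
begin

lemma phi_has_minimiser:
  assumes "0 < e"
  shows "\<exists>x. \<forall>y. phi f e x \<le> phi f e y"
proof -
  define m where "m = (INF y. phi f e y)"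
  obtain M where "\<And>y. M \<le> f y"
    using bdd_below by (auto simp: bdd_below_def)
  with \<open>0 < e\<close> have "bdd_below (range (phi f e))"
    unfolding bdd_below_def phi_def by (auto intro!: exI[of _ M] add_increasing2)
  then have lower: "m \<le> phi f e y" for y
    unfolding m_def by (simp add: cINF_lower)
  have "\<exists>x. phi f e x < m + inverse (real (Suc n))" for n
    using cINF_less_iff[OF _ \<open>bdd_below (range (phi f e))\<close>, of "m + inverse (real (Suc n))"]
    by (auto simp: m_def)
  then obtain u where u: "\<And>n. phi f e (u n) < m + inverse (real (Suc n))"
    by metis
  have "(\<lambda>n. phi f e (u n)) \<longlonglongrightarrow> m"
    by (rule tendsto_sandwich[OF _ _ tendsto_const LIMSEQ_inverse_real_of_nat_add])
      (intro always_eventually allI lower less_imp_le u)+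
  moreover from this have "Cauchy u"
    using Cauchy_phi_minimising_sequence[OF convex \<open>0 < e\<close> lower] by blast
  then obtain x where "u \<longlonglongrightarrow> x"
    using Cauchy_convergent_iff convergent_def by blast
  then have "(\<lambda>n. phi f e (u n)) \<longlonglongrightarrow> phi f e x"
    unfolding phi_def by (intro tendsto_intros continuous_on_tendsto_compose[OF continuous]) auto
  ultimately have "phi f e x = m"
    using LIMSEQ_unique by blast
  with lower show ?thesis by auto
qed

lemma xeps_minimal:
  assumes "0 < e"
  shows "phi f e (xeps f e) \<le> phi f e y"
proof -
  obtain x where x: "\<forall>y. phi f e x \<le> phi f e y"
    using phi_has_minimiser[OF assms] by blast
  have "x' = x" if x': "\<forall>y. phi f e x' \<le> phi f e y" for x'
  proof -
    have "e / 2 * (norm (x' - x))\<^sup>2 \<le> phi f e x' - phi f e x"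
      by (rule phi_quadratic_growth[OF convex]) (use assms x in auto)
    also have "\<dots> \<le> 0" using x'[rule_format, of x] by simp
    finally show ?thesis using assms by (simp add: mult_le_0_iff)
  qed
  with x have "xeps f e = x"
    unfolding xeps_def by (rule the_equality)
  with x show ?thesis by simp
qed

lemma xeps_quadratic_growth:
  assumes "0 < e"
  shows "e / 2 * (norm (y - xeps f e))\<^sup>2 \<le> phi f e y - phi f e (xeps f e)"
  by (rule phi_quadratic_growth[OF convex]) (use assms xeps_minimal in auto)

lemma dist_xeps_minimiser_le:
  assumes "0 < e" and min: "\<And>y. f xs \<le> f y"
  shows "(norm (xeps f e - xs))\<^sup>2 \<le> (norm xs)\<^sup>2 - (norm (xeps f e))\<^sup>2"
proof -
  have "e / 2 * (norm (xs - xeps f e))\<^sup>2 \<le> phi f e xs - phi f e (xeps f e)"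
    by (rule xeps_quadratic_growth[OF assms(1)])
  also have "\<dots> \<le> e / 2 * ((norm xs)\<^sup>2 - (norm (xeps f e))\<^sup>2)"
    using min[of "xeps f e"] unfolding phi_def by (simp add: algebra_simps)
  finally show ?thesis
    using assms(1) by (simp add: norm_minus_commute)
qed

lemma dist_xeps_xeps_le:
  assumes "0 < e'" and "e' \<le> e"
  shows "(norm (xeps f e - xeps f e'))\<^sup>2 \<le> (norm (xeps f e'))\<^sup>2 - (norm (xeps f e))\<^sup>2"
proof -
  let ?x = "xeps f e" and ?x' = "xeps f e'"
  define d where "d = (norm (?x - ?x'))\<^sup>2"
  define N where "N = (norm ?x')\<^sup>2 - (norm ?x)\<^sup>2"
  have "0 < e" using assms by simp
  have "e / 2 * (norm (?x' - ?x))\<^sup>2 \<le> phi f e ?x' - phi f e ?x"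
    by (rule xeps_quadratic_growth[OF \<open>0 < e\<close>])
  moreover have "e' / 2 * (norm (?x - ?x'))\<^sup>2 \<le> phi f e' ?x - phi f e' ?x'"
    by (rule xeps_quadratic_growth[OF assms(1)])
  moreover have "phi f e ?x' - phi f e ?x + (phi f e' ?x - phi f e' ?x') = (e - e') / 2 * N"
    unfolding phi_def N_def by (simp add: field_simps)
  ultimately have "e / 2 * d + e' / 2 * d \<le> (e - e') / 2 * N"
    unfolding d_def by (simp only: norm_minus_commute[of ?x' ?x])
  then have key: "(e + e') * d \<le> (e - e') * N"
    by (simp add: field_simps)
  show ?thesis
  proof (cases "0 \<le> N")
    case True
    then have "(e - e') * N \<le> (e + e') * N"
      using assms by (intro mult_right_mono) auto
    with key have "(e + e') * d \<le> (e + e') * N" by linarith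
    moreover have "0 < e + e'" using assms by simp
    ultimately have "d \<le> N" by simp
    then show ?thesis unfolding d_def N_def .
  next
    case False
    with assms have "(e - e') * N \<le> 0" by (intro mult_nonneg_nonpos) auto
    with key have "(e + e') * d \<le> 0" by linarith
    with assms have "d \<le> 0" by (simp add: mult_le_0_iff)
    then have "?x = ?x'" unfolding d_def by simp
    with False show ?thesis unfolding N_def by simp
  qed
qed

lemma norm_xeps_le_minimiser:
  assumes "0 < e" and "\<And>y. f xs \<le> f y"
  shows "norm (xeps f e) \<le> norm xs"
proof -
  have "(norm (xeps f e))\<^sup>2 \<le> (norm xs)\<^sup>2"
    using dist_xeps_minimiser_le[OF assms] zero_le_power2[of "norm (xeps f e - xs)"] by linarith
  then show ?thesis by (simp add: power_mono_iff)
qed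

lemma xeps_limit_is_min_norm_minimiser:
  assumes min: "\<And>y. f xs \<le> f y" and min_norm: "\<And>z. (\<forall>y. f z \<le> f y) \<Longrightarrow> norm xs \<le> norm z"
    and pos: "\<And>n. 0 < e n" and "e \<longlonglongrightarrow> 0" and lim: "(\<lambda>n. xeps f (e n)) \<longlonglongrightarrow> z"
  shows "z = xs"
proof (rule min_norm_minimiser_unique[OF convex min min_norm])
  have "f (xeps f (e n)) \<le> f xs + e n / 2 * (norm xs)\<^sup>2" for n
  proof -
    have "phi f (e n) (xeps f (e n)) \<le> phi f (e n) xs" by (rule xeps_minimal[OF pos])
    moreover have "0 \<le> e n / 2 * (norm (xeps f (e n)))\<^sup>2" using pos[of n] by simp
    ultimately show ?thesis unfolding phi_def by linarith
  qed
  moreover have "(\<lambda>n. f (xeps f (e n))) \<longlonglongrightarrow> f z"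
    using continuous_on_tendsto_compose[OF continuous lim] by simp
  moreover have "(\<lambda>n. f xs + e n / 2 * (norm xs)\<^sup>2) \<longlonglongrightarrow> f xs + 0 / 2 * (norm xs)\<^sup>2"
    by (intro tendsto_intros \<open>e \<longlonglongrightarrow> 0\<close>) simp
  ultimately show "f z \<le> f xs"
    by (intro tendsto_le[OF trivial_limit_sequentially, of "\<lambda>n. f xs + e n / 2 * (norm xs)\<^sup>2"])
      (auto intro: always_eventually)
  show "norm z \<le> norm xs"
    by (rule tendsto_le[OF trivial_limit_sequentially tendsto_const tendsto_norm[OF lim]])
      (intro always_eventually allI norm_xeps_le_minimiser pos min)
qed

lemma xeps_inverse_Suc_tendsto_min_norm_minimiser:
  assumes min: "\<And>y. f xs \<le> f y" and min_norm: "\<And>z. (\<forall>y. f z \<le> f y) \<Longrightarrow> norm xs \<le> norm z"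
  shows "(\<lambda>n. xeps f (inverse (real (Suc n)))) \<longlonglongrightarrow> xs"
proof -
  define g where "g n = xeps f (inverse (real (Suc n)))" for n
  have "Cauchy g"
  proof (rule Cauchy_if_dist_le_norm_gap)
    show "(norm (g n - g k))\<^sup>2 \<le> (norm (g k))\<^sup>2 - (norm (g n))\<^sup>2" if "n \<le> k" for n k
      unfolding g_def by (rule dist_xeps_xeps_le) (use that in \<open>auto intro: le_imp_inverse_le\<close>)
    show "norm (g n) \<le> norm xs" for n
      unfolding g_def by (rule norm_xeps_le_minimiser[OF _ min]) simp
  qed
  then obtain z where "g \<longlonglongrightarrow> z"
    using Cauchy_convergent_iff convergent_def by blast
  moreover from this have "z = xs"
    unfolding g_def
    by (intro xeps_limit_is_min_norm_minimiser[OF min min_norm _ LIMSEQ_inverse_real_of_nat]) auto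
  ultimately show ?thesis
    unfolding g_def by simp
qed

lemma tendsto_norm_xeps_min_norm_minimiser:
  assumes min: "\<And>y. f xs \<le> f y" and min_norm: "\<And>z. (\<forall>y. f z \<le> f y) \<Longrightarrow> norm xs \<le> norm z"
  shows "((\<lambda>e. (norm (xeps f e))\<^sup>2) \<longlongrightarrow> (norm xs)\<^sup>2) (at_right 0)"
proof (rule increasing_tendsto)
  show "\<forall>\<^sub>F e in at_right 0. (norm (xeps f e))\<^sup>2 \<le> (norm xs)\<^sup>2"
    using eventually_at_right_less
    by (rule eventually_mono) (simp add: norm_xeps_le_minimiser[OF _ min] power_mono)
  fix c
  assume "c < (norm xs)\<^sup>2"
  moreover have "(\<lambda>n. (norm (xeps f (inverse (real (Suc n)))))\<^sup>2) \<longlonglongrightarrow> (norm xs)\<^sup>2"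
    by (intro tendsto_intros xeps_inverse_Suc_tendsto_min_norm_minimiser min min_norm)
  ultimately have "\<forall>\<^sub>F n in sequentially. c < (norm (xeps f (inverse (real (Suc n)))))\<^sup>2"
    by (rule order_tendstoD(1)[rotated])
  then obtain n where n: "c < (norm (xeps f (inverse (real (Suc n)))))\<^sup>2"
    unfolding eventually_sequentially by blast
  have "c < (norm (xeps f e))\<^sup>2" if "0 < e" "e < inverse (real (Suc n))" for e
    using dist_xeps_xeps_le[of e "inverse (real (Suc n))"] that n
      zero_le_power2[of "norm (xeps f (inverse (real (Suc n))) - xeps f e)"]
    by linarith
  then show "\<forall>\<^sub>F e in at_right 0. c < (norm (xeps f e))\<^sup>2"
    unfolding eventually_at_right_field by (intro exI[of _ "inverse (real (Suc n))"]) auto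
qed

theorem tendsto_xeps_min_norm_minimiser:
  assumes min: "\<And>y. f xs \<le> f y" and min_norm: "\<And>z. (\<forall>y. f z \<le> f y) \<Longrightarrow> norm xs \<le> norm z"
  shows "(xeps f \<longlongrightarrow> xs) (at_right 0)"
proof -
  have "((\<lambda>e. sqrt ((norm xs)\<^sup>2 - (norm (xeps f e))\<^sup>2))
      \<longlongrightarrow> sqrt ((norm xs)\<^sup>2 - (norm xs)\<^sup>2)) (at_right 0)"
    by (intro tendsto_intros tendsto_norm_xeps_min_norm_minimiser min min_norm)
  then have "((\<lambda>e. sqrt ((norm xs)\<^sup>2 - (norm (xeps f e))\<^sup>2)) \<longlongrightarrow> 0) (at_right 0)"
    by simp
  then have "((\<lambda>e. xeps f e - xs) \<longlongrightarrow> 0) (at_right 0)"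
    using eventually_at_right_less
    by (rule Lim_null_comparison[rotated, OF _ eventually_mono])
      (intro real_le_rsqrt dist_xeps_minimiser_le min)
  then show ?thesis by (rule LIM_zero_cancel)
qed

lemma objective_gap_le_Energy:
  assumes "0 < eps t"
  shows "f x - f z \<le> Energy f eps lam t x y + eps t / 2 * (norm z)\<^sup>2"
proof -
  have "f x \<le> phi f (eps t) x"
    unfolding phi_def using assms by simp
  moreover have "phi f (eps t) (xeps f (eps t)) \<le> f z + eps t / 2 * (norm z)\<^sup>2"
    using xeps_minimal[OF assms] unfolding phi_def .
  moreover have "0 \<le> 1 / 2 * (norm (Vfun f eps lam t x y))\<^sup>2" by simp
  ultimately show ?thesis unfolding Energy_def by linarith
qed

lemma dist_xeps_le_Energy:
  assumes "0 < eps t"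
  shows "(norm (x - xeps f (eps t)))\<^sup>2 \<le> 2 * Energy f eps lam t x y / eps t"
proof -
  have "eps t / 2 * (norm (x - xeps f (eps t)))\<^sup>2 \<le> Energy f eps lam t x y"
    using xeps_quadratic_growth[OF assms, of x] zero_le_power2[of "norm (Vfun f eps lam t x y)"]
    unfolding Energy_def by linarith
  with assms show ?thesis by (simp add: pos_le_divide_eq field_simps)
qed

lemma tendsto_min_norm_minimiser_if_Energy_over_eps:
  assumes min: "\<And>y. f xs \<le> f y" and min_norm: "\<And>z. (\<forall>y. f z \<le> f y) \<Longrightarrow> norm xs \<le> norm z"
    and pos: "\<forall>\<^sub>F t in F. 0 < eps t" and "(eps \<longlongrightarrow> 0) F"
    and Energy: "((\<lambda>t. Energy f eps lam t (x t) (y t) / eps t) \<longlongrightarrow> 0) F"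
  shows "(x \<longlongrightarrow> xs) F"
proof -
  have "((\<lambda>t. xeps f (eps t)) \<longlongrightarrow> xs) F"
    using filterlim_compose[OF tendsto_xeps_min_norm_minimiser[OF min min_norm]
        tendsto_imp_filterlim_at_right[OF \<open>(eps \<longlongrightarrow> 0) F\<close> pos]] .
  moreover have "((\<lambda>t. x t - xeps f (eps t)) \<longlongrightarrow> 0) F"
  proof (rule Lim_null_comparison)
    show "\<forall>\<^sub>F t in F. norm (x t - xeps f (eps t)) \<le> sqrt (2 * (Energy f eps lam t (x t) (y t) / eps t))"
      using pos by (rule eventually_mono) (intro real_le_rsqrt, simp add: dist_xeps_le_Energy)
    have "((\<lambda>t. sqrt (2 * (Energy f eps lam t (x t) (y t) / eps t))) \<longlongrightarrow> sqrt (2 * 0)) F"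
      by (intro tendsto_intros Energy)
    then show "((\<lambda>t. sqrt (2 * (Energy f eps lam t (x t) (y t) / eps t))) \<longlongrightarrow> 0) F" by simp
  qed
  ultimately show ?thesis
    using tendsto_add[of "\<lambda>t. x t - xeps f (eps t)" 0 F "\<lambda>t. xeps f (eps t)" xs] by simp
qed

end

theorem mainTheorem3:
  fixes f :: "'a::{real_inner, complete_space, second_countable_topology} \<Rightarrow> real"
    and gradf :: "'a \<Rightarrow> 'a" and L :: real
    and xstar :: 'a
    and eps eps' :: "real \<Rightarrow> real" and t0 delta lam :: real
    and M :: "'w measure"
    and X Y :: "real \<Rightarrow> 'w \<Rightarrow> 'a" and X0 Y0 :: "'w \<Rightarrow> 'a"
  assumes t0: "t0 > 0"
    and convex: "convex_on UNIV f"
    and grad: "\<And>x. (f has_derivative (\<lambda>h. gradf x \<bullet> h)) (at x)"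
    and lip: "L-lipschitz_on UNIV gradf"
    and argmin_ne: "argmin_set f \<noteq> {}"
    and xstar: "xstar \<in> argmin_set f" "\<And>z. z \<in> argmin_set f \<Longrightarrow> norm xstar \<le> norm z"
    and eps_pos: "\<And>t. t \<ge> t0 \<Longrightarrow> eps t > 0"
    and eps_mono: "\<And>s t. t0 \<le> s \<Longrightarrow> s \<le> t \<Longrightarrow> eps t \<le> eps s"
    and eps_deriv: "\<And>t. t \<ge> t0 \<Longrightarrow> (eps has_real_derivative eps' t) (at t within {t0..})"
    and eps'_cont: "continuous_on {t0..} eps'"
    and eps_lim: "(eps \<longlongrightarrow> 0) at_top"
    and delta: "delta > 0" and lambda: "lam > 0"
    and M: "prob_space M"
    and X_meas: "\<And>t. t \<ge> t0 \<Longrightarrow> X t \<in> borel_measurable M"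
    and Y_meas: "\<And>t. t \<ge> t0 \<Longrightarrow> Y t \<in> borel_measurable M"
    and init: "\<And>\<omega>. \<omega> \<in> space M \<Longrightarrow> X t0 \<omega> = X0 \<omega> \<and> Y t0 \<omega> = Y0 \<omega>"
    and Y_cont: "\<And>\<omega>. \<omega> \<in> space M \<Longrightarrow> continuous_on {t0..} (\<lambda>s. Y s \<omega>)"
    and dX: "\<And>\<omega> t. \<omega> \<in> space M \<Longrightarrow> t \<ge> t0 \<Longrightarrow>
               ((\<lambda>s. X s \<omega>) has_vector_derivative Y t \<omega>) (at t within {t0..})"
  shows "(\<forall>\<omega>\<in>space M. \<forall>t\<ge>t0.
            f (X t \<omega>) - (INF x. f x) \<le> Energy f eps lam t (X t \<omega>) (Y t \<omega>) + eps t / 2 * (norm xstar)\<^sup>2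
          \<and> (norm (X t \<omega> - xeps f (eps t)))\<^sup>2 \<le> 2 * Energy f eps lam t (X t \<omega>) (Y t \<omega>) / eps t)
       \<and> ((AE \<omega> in M. ((\<lambda>t. Energy f eps lam t (X t \<omega>) (Y t \<omega>) / eps t) \<longlongrightarrow> 0) at_top)
          \<longrightarrow> (AE \<omega> in M. ((\<lambda>t. X t \<omega>) \<longlongrightarrow> xstar) at_top))"
proof -
  have min: "\<And>y. f xstar \<le> f y" and min_norm: "\<And>z. (\<forall>y. f z \<le> f y) \<Longrightarrow> norm xstar \<le> norm z"
    using xstar by (auto simp: argmin_set_def)
  interpret tikhonov f
  proof
    show "continuous_on UNIV f"
      by (rule has_derivative_continuous_on) (use grad in blast)
  qed (use convex min in \<open>auto simp: bdd_below_def\<close>)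
  have inf: "(INF x. f x) = f xstar"
    using min by (intro cInf_eq_minimum) auto
  have eventually_pos: "\<forall>\<^sub>F t in at_top. 0 < eps t"
    using eventually_ge_at_top[of t0] by (rule eventually_mono) (rule eps_pos)
  show ?thesis
  proof (intro conjI ballI allI impI)
    fix \<omega> t
    assume "t0 \<le> t"
    show "f (X t \<omega>) - (INF x. f x) \<le> Energy f eps lam t (X t \<omega>) (Y t \<omega>) + eps t / 2 * (norm xstar)\<^sup>2"
      unfolding inf by (rule objective_gap_le_Energy[where eps = eps, OF eps_pos[OF \<open>t0 \<le> t\<close>]])
    show "(norm (X t \<omega> - xeps f (eps t)))\<^sup>2 \<le> 2 * Energy f eps lam t (X t \<omega>) (Y t \<omega>) / eps t"
      by (rule dist_xeps_le_Energy[where eps = eps, OF eps_pos[OF \<open>t0 \<le> t\<close>]])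
  next
    assume "AE \<omega> in M. ((\<lambda>t. Energy f eps lam t (X t \<omega>) (Y t \<omega>) / eps t) \<longlongrightarrow> 0) at_top"
    then show "AE \<omega> in M. ((\<lambda>t. X t \<omega>) \<longlongrightarrow> xstar) at_top"
      by (rule AE_mp) (intro AE_I2 impI tendsto_min_norm_minimiser_if_Energy_over_eps
          [where eps = eps, OF min min_norm eventually_pos eps_lim])
  qed
qed

end
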